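(* Let $M=(E,\Delta)$ be a matroid of rank $r$ that is realizable over some field, and let $(f_0,f_1,\ldots,f_r)$ be the $f$-vector of its matroid complex $\Delta$. Then the $f$-vector is strictly log-concave, i.e. $$f_i^2 > f_{i-1}f_{i+1}\qquad\text{for } i=1,\ldots,r-1.$$
   Context: A matroid $M=(E,\Delta)$ has finite ground set $E$ and matroid complex $\Delta\subseteq 2^E$, the simplicial complex of independent sets. The rank $r$ of $M$ is the maximal cardinality of an independent set. The $f$-vector $(f_0,\ldots,f_r)$ is defined by $f_i=\#\{A\in\Delta : |A|=i\}$. A matroid is realizable over a field $\mathbb{K}$ if there is a list of vectors in some $\mathbb{K}^n$, indexed by $E$, whose linearly independent sublists are exactly the sets in $\Delta$. *)

theory Defs
  imports Main
begin

definition matroid :: "'e set \<Rightarrow> 'e set set \<Rightarrow> bool" where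
  "matroid E Delta \<longleftrightarrow>
     finite E \<and> Delta \<subseteq> Pow E \<and> {} \<in> Delta \<and>
     (\<forall>A B. B \<in> Delta \<and> A \<subseteq> B \<longrightarrow> A \<in> Delta) \<and>
     (\<forall>A B. A \<in> Delta \<and> B \<in> Delta \<and> card A < card B \<longrightarrow>
        (\<exists>x \<in> B - A. insert x A \<in> Delta))"

definition matroid_rank :: "'e set set \<Rightarrow> nat" where
  "matroid_rank Delta = Max (card ` Delta)"

definition fvec :: "'e set set \<Rightarrow> nat \<Rightarrow> nat" where
  "fvec Delta i = card {A \<in> Delta. card A = i}"

text \<open>Vectors of K^n are represented as functions nat => K, only coordinates < n matter.\<close>
definition lin_indep_family :: "nat \<Rightarrow> ('e \<Rightarrow> nat \<Rightarrow> 'k::field) \<Rightarrow> 'e set \<Rightarrow> bool" where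
  "lin_indep_family n v A \<longleftrightarrow>
     (\<forall>c :: 'e \<Rightarrow> 'k. (\<forall>j<n. (\<Sum>a\<in>A. c a * v a j) = 0) \<longrightarrow> (\<forall>a\<in>A. c a = 0))"

definition realizable_over :: "('k::field) itself \<Rightarrow> 'e set \<Rightarrow> 'e set set \<Rightarrow> bool" where
  "realizable_over _ E Delta \<longleftrightarrow>
     (\<exists>n (v :: 'e \<Rightarrow> nat \<Rightarrow> 'k). \<forall>A. A \<subseteq> E \<longrightarrow> (A \<in> Delta \<longleftrightarrow> lin_indep_family n v A))"

end

theory Submission
  imports Defs "Jordan_Normal_Form.Determinant"
begin

text \<open>
  The argument is the Lorentzian-polynomial proof
  (Branden-Huh; Anari-Liu-Oveis Gharan-Vinzant).  Let g_d(y, x) be the sum, over independent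
  sets I with |I| <= d, of y^(d - |I|) / (d - |I|)! x^I.  Its partial derivatives are the
  polynomials of contractions, and by induction on d its Hessian at every positive point is
  hyperbolic (at most one positive eigenvalue).
\<close>

lemma mat_solvable_if_injective:
  fixes A :: "'k::field mat"
  assumes A: "A \<in> carrier_mat n n" and b: "b \<in> carrier_vec n"
    and inj: "\<And>v. v \<in> carrier_vec n \<Longrightarrow> A *\<^sub>v v = 0\<^sub>v n \<Longrightarrow> v = 0\<^sub>v n"
  shows "\<exists>v \<in> carrier_vec n. A *\<^sub>v v = b"
proof -
  have "det A \<noteq> 0"
    using det_0_iff_vec_prod_zero_field[OF A] inj by blast
  from det_non_zero_imp_unit[OF A this, of "()"]
  obtain B where B: "B \<in> carrier_mat n n" "A * B = 1\<^sub>m n"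
    unfolding Units_def ring_mat_def by auto
  have "A *\<^sub>v (B *\<^sub>v b) = (A * B) *\<^sub>v b"
    using assoc_mult_mat_vec[OF A B(1) b] by simp
  also have "\<dots> = b" using B(2) b by simp
  finally have "A *\<^sub>v (B *\<^sub>v b) = b" .
  moreover have "B *\<^sub>v b \<in> carrier_vec n" using B(1) b by simp
  ultimately show ?thesis by blast
qed

lemma linear_system_solvable_if_injective:
  fixes K :: "'a \<Rightarrow> 'a \<Rightarrow> 'k::field"
  assumes fin: "finite N"
    and inj: "\<And>w. \<forall>a\<in>N. (\<Sum>b\<in>N. K a b * w b) = 0 \<Longrightarrow> \<forall>a\<in>N. w a = 0"
  shows "\<exists>w. \<forall>a\<in>N. (\<Sum>b\<in>N. K a b * w b) = r a"
proof -
  define n where "n = card N"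
  obtain g where g: "bij_betw g {0..<n} N"
    using ex_bij_betw_nat_finite[OF fin] unfolding n_def by blast
  define gi where "gi = inv_into {0..<n} g"
  have gi: "gi b < n" "g (gi b) = b" if "b \<in> N" for b
    using g that unfolding gi_def bij_betw_def
    by (metis atLeastLessThan_iff f_inv_into_f inv_into_into)+
  have gi_g: "gi (g j) = j" if "j < n" for j
    using g that unfolding gi_def bij_betw_def by (simp add: inv_into_f_f)
  have g_in: "g j \<in> N" if "j < n" for j
    using g that unfolding bij_betw_def by auto
  define A :: "'k mat" where "A = mat n n (\<lambda>(i, j). K (g i) (g j))"
  have A: "A \<in> carrier_mat n n" unfolding A_def by simp
  have reindex: "(A *\<^sub>v v) $ gi a = (\<Sum>b\<in>N. K a b * v $ gi b)"
    if a: "a \<in> N" and v: "v \<in> carrier_vec n" for a v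
  proof -
    have "(A *\<^sub>v v) $ gi a = (\<Sum>j\<in>{0..<n}. K a (g j) * v $ gi (g j))"
      using gi[OF a] v gi_g unfolding A_def by (simp add: scalar_prod_def row_def)
    also have "\<dots> = (\<Sum>b\<in>N. K a b * v $ gi b)"
      using sum.reindex_bij_betw[OF g, of "\<lambda>b. K a b * v $ gi b"] by simp
    finally show ?thesis .
  qed
  have "\<exists>v \<in> carrier_vec n. A *\<^sub>v v = vec n (\<lambda>i. r (g i))"
  proof (rule mat_solvable_if_injective[OF A])
    fix v :: "'k vec" assume v: "v \<in> carrier_vec n" and Av: "A *\<^sub>v v = 0\<^sub>v n"
    have "\<forall>a\<in>N. (\<Sum>b\<in>N. K a b * v $ gi b) = 0"
      using reindex[OF _ v] Av gi by (metis index_zero_vec(1))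
    then have "\<forall>a\<in>N. v $ gi a = 0" by (rule inj)
    then show "v = 0\<^sub>v n" using v g_in gi_g by (intro eq_vecI) force+
  qed simp
  then obtain v where v: "v \<in> carrier_vec n" "A *\<^sub>v v = vec n (\<lambda>i. r (g i))" by blast
  have "\<forall>a\<in>N. (\<Sum>b\<in>N. K a b * v $ gi b) = r a"
    using reindex[OF _ v(1)] v(2) gi by (metis index_vec)
  then show ?thesis by (intro exI[of _ "\<lambda>b. v $ gi b"])
qed

definition symmetric_on :: "'a set \<Rightarrow> ('a \<Rightarrow> 'a \<Rightarrow> real) \<Rightarrow> bool" where
  "symmetric_on N H \<longleftrightarrow> (\<forall>a\<in>N. \<forall>b\<in>N. H a b = H b a)"

definition matvec :: "'a set \<Rightarrow> ('a \<Rightarrow> 'a \<Rightarrow> real) \<Rightarrow> ('a \<Rightarrow> real) \<Rightarrow> 'a \<Rightarrow> real" where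
  "matvec N H v a = (\<Sum>b\<in>N. H a b * v b)"

definition bilin :: "'a set \<Rightarrow> ('a \<Rightarrow> 'a \<Rightarrow> real) \<Rightarrow> ('a \<Rightarrow> real) \<Rightarrow> ('a \<Rightarrow> real) \<Rightarrow> real" where
  "bilin N H u v = (\<Sum>a\<in>N. \<Sum>b\<in>N. u a * H a b * v b)"

lemma bilin_matvec: "bilin N H u v = (\<Sum>a\<in>N. u a * matvec N H v a)"
  unfolding bilin_def matvec_def by (simp add: sum_distrib_left mult.assoc)

lemma bilin_linear_left:
  "bilin N H (\<lambda>a. \<alpha> * u a + \<beta> * v a) w = \<alpha> * bilin N H u w + \<beta> * bilin N H v w"
  unfolding bilin_def by (simp add: algebra_simps sum.distrib sum_distrib_left)

lemma bilin_linear_right: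
  "bilin N H w (\<lambda>a. \<alpha> * u a + \<beta> * v a) = \<alpha> * bilin N H w u + \<beta> * bilin N H w v"
  unfolding bilin_def by (simp add: algebra_simps sum.distrib sum_distrib_left)

lemma bilin_sym:
  assumes "symmetric_on N H"
  shows "bilin N H u v = bilin N H v u"
proof -
  have "bilin N H u v = (\<Sum>b\<in>N. \<Sum>a\<in>N. u a * H a b * v b)"
    unfolding bilin_def by (rule sum.swap)
  also have "\<dots> = bilin N H v u"
    unfolding bilin_def using assms
    by (intro sum.cong refl) (auto simp: symmetric_on_def mult_ac)
  finally show ?thesis .
qed

text \<open>A symmetric form is hyperbolic (has Lorentzian signature, i.e. at most one positive
  eigenvalue) if it satisfies the reverse Cauchy-Schwarz inequality at every vector of
  positive norm.\<close>
definition hyperbolic :: "'a set \<Rightarrow> ('a \<Rightarrow> 'a \<Rightarrow> real) \<Rightarrow> bool" where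
  "hyperbolic N H \<longleftrightarrow>
     (\<forall>z w. 0 < bilin N H z z \<longrightarrow> bilin N H z z * bilin N H w w \<le> (bilin N H z w)^2)"

lemma hyperbolicI:
  assumes sym: "symmetric_on N H" and x_pos: "0 < bilin N H x x"
    and neg: "\<And>z. bilin N H x z = 0 \<Longrightarrow> bilin N H z z \<le> 0"
  shows "hyperbolic N H"
  unfolding hyperbolic_def
proof (intro allI impI)
  fix z w assume z_pos: "0 < bilin N H z z"
  define B where "B = bilin N H"
  have B_sym: "B u v = B v u" for u v unfolding B_def by (rule bilin_sym[OF sym])
  have B_left: "B (\<lambda>a. \<alpha> * u a + \<beta> * v a) w = \<alpha> * B u w + \<beta> * B v w" for \<alpha> \<beta> u v w
    unfolding B_def by (rule bilin_linear_left)
  have B_right: "B w (\<lambda>a. \<alpha> * u a + \<beta> * v a) = \<alpha> * B w u + \<beta> * B w v" for \<alpha> \<beta> u v w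
    unfolding B_def by (rule bilin_linear_right)
  have xz: "B x z \<noteq> 0" using neg z_pos unfolding B_def by force
  \<comment> \<open>First the same statement with z in place of x: B is negative semidefinite on z's complement.\<close>
  have z_perp: "B u u \<le> 0" if zu: "B z u = 0" for u
  proof (rule ccontr)
    assume "\<not> B u u \<le> 0"
    define v where "v = (\<lambda>a. B x u * z a + (- B x z) * u a)"
    have "B x v = 0" unfolding v_def B_right by simp
    then have "B v v \<le> 0" using neg unfolding B_def by blast
    moreover have "B v v = (B x u)^2 * B z z + (B x z)^2 * B u u"
      unfolding v_def B_left B_right using zu B_sym[of u z]
      by (simp add: power2_eq_square algebra_simps)
    moreover have "0 \<le> (B x u)^2 * B z z" using z_pos unfolding B_def by simp
    moreover have "0 < (B x z)^2 * B u u" using xz \<open>\<not> B u u \<le> 0\<close> by simp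
    ultimately show False by linarith
  qed
  \<comment> \<open>Project w onto the complement of z.\<close>
  define c where "c = B z w / B z z"
  have "B z (\<lambda>a. 1 * w a + (- c) * z a) = 0"
    unfolding B_right c_def using z_pos B_def by simp
  then have "B (\<lambda>a. 1 * w a + (- c) * z a) (\<lambda>a. 1 * w a + (- c) * z a) \<le> 0"
    by (rule z_perp)
  then have "B w w - 2 * c * B z w + c^2 * B z z \<le> 0"
    unfolding B_left B_right using B_sym[of z w] by (simp add: power2_eq_square algebra_simps)
  moreover have "c^2 * B z z = c * B z w" "c * B z w * B z z = (B z w)^2"
    unfolding c_def using z_pos B_def by (simp_all add: power2_eq_square field_simps)
  ultimately have "B w w \<le> c * B z w" by linarith
  then have "B w w * B z z \<le> c * B z w * B z z"
    using z_pos unfolding B_def by (simp add: mult_right_mono)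
  then have "B w w * B z z \<le> (B z w)^2" using \<open>c * B z w * B z z = (B z w)^2\<close> by simp
  then show "bilin N H z z * bilin N H w w \<le> (bilin N H z w)^2"
    unfolding B_def by (simp add: mult_ac)
qed

lemma quadratic_nonneg_discriminant:
  fixes A B C :: real
  assumes nonneg: "\<And>t. 0 \<le> A + 2 * t * B + t^2 * C" and C: "0 \<le> C"
  shows "B^2 \<le> A * C"
proof (cases "C = 0")
  case True
  have "B = 0"
  proof (rule ccontr)
    assume "B \<noteq> 0"
    then have "A + 2 * (-(A + 1) / (2 * B)) * B + (-(A + 1) / (2 * B))^2 * C = -1"
      using True by (simp add: field_simps)
    then show False using nonneg by (metis neg_0_le_iff_le not_one_le_zero)
  qed
  then show ?thesis using True by simp
next
  case False
  then have C: "0 < C" using C by simp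
  have "0 \<le> A + 2 * (-B / C) * B + (-B / C)^2 * C" by (rule nonneg)
  also have "\<dots> = A - B^2 / C" using C by (simp add: power2_eq_square field_simps)
  finally show ?thesis using C by (simp add: field_simps)
qed

text \<open>With the diagonal weights d a = (Hp) a / p a, the matrix L = diag d - H is
  a weighted graph Laplacian: it kills p and is positive semidefinite.\<close>
locale nonneg_weighting =
  fixes N :: "'a set" and H :: "'a \<Rightarrow> 'a \<Rightarrow> real" and p :: "'a \<Rightarrow> real"
  assumes finite_N: "finite N"
    and symmetric: "symmetric_on N H"
    and nonneg: "\<And>a b. a \<in> N \<Longrightarrow> b \<in> N \<Longrightarrow> 0 \<le> H a b"
    and p_pos: "\<And>a. a \<in> N \<Longrightarrow> 0 < p a"
    and Hp_pos: "\<And>a. a \<in> N \<Longrightarrow> 0 < matvec N H p a"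
begin

definition weight :: "'a \<Rightarrow> real" where
  "weight a = matvec N H p a / p a"

definition lap :: "('a \<Rightarrow> real) \<Rightarrow> ('a \<Rightarrow> real) \<Rightarrow> real" where
  "lap u v = (\<Sum>a\<in>N. weight a * u a * v a) - bilin N H u v"

lemma p_nonzero: "a \<in> N \<Longrightarrow> p a \<noteq> 0"
  using p_pos by (simp add: less_imp_neq[symmetric])

lemma weight_pos: "a \<in> N \<Longrightarrow> 0 < weight a"
  unfolding weight_def using p_pos Hp_pos by simp

lemma weight_times_p: "a \<in> N \<Longrightarrow> weight a * p a = matvec N H p a"
  unfolding weight_def by (simp add: p_nonzero)

lemma lap_matvec: "lap u v = (\<Sum>a\<in>N. u a * (weight a * v a - matvec N H v a))"
  unfolding lap_def bilin_matvec by (simp add: algebra_simps sum_subtractf)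

lemma lap_sum_squares:
  "lap w w = (\<Sum>a\<in>N. \<Sum>b\<in>N. H a b * p a * p b * (w a / p a - w b / p b)^2) / 2"
proof -
  have diag: "(\<Sum>a\<in>N. \<Sum>b\<in>N. H a b * p b * (w a)^2 / p a) = (\<Sum>a\<in>N. weight a * w a * w a)"
    unfolding weight_def matvec_def
    by (intro sum.cong refl) (simp add: power2_eq_square sum_divide_distrib sum_distrib_right mult.assoc)
  have diag': "(\<Sum>a\<in>N. \<Sum>b\<in>N. H a b * p a * (w b)^2 / p b) = (\<Sum>a\<in>N. weight a * w a * w a)"
  proof -
    have "(\<Sum>a\<in>N. \<Sum>b\<in>N. H a b * p a * (w b)^2 / p b) = (\<Sum>b\<in>N. \<Sum>a\<in>N. H b a * p a * (w b)^2 / p b)"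
      using symmetric by (subst sum.swap) (intro sum.cong refl, auto simp: symmetric_on_def)
    then show ?thesis using diag by simp
  qed
  have "(\<Sum>a\<in>N. \<Sum>b\<in>N. H a b * p a * p b * (w a / p a - w b / p b)^2)
      = (\<Sum>a\<in>N. \<Sum>b\<in>N. H a b * p b * (w a)^2 / p a + H a b * p a * (w b)^2 / p b
           - 2 * (w a * H a b * w b))"
    by (intro sum.cong refl) (simp add: p_nonzero power2_eq_square field_simps)
  also have "\<dots> = 2 * lap w w"
    unfolding sum.distrib sum_subtractf diag diag' lap_def bilin_def
    by (simp add: sum_distrib_left)
  finally show ?thesis by simp
qed

lemma lap_nonneg: "0 \<le> lap w w"
  unfolding lap_sum_squares using nonneg p_pos
  by (intro divide_nonneg_pos sum_nonneg) (auto intro!: mult_nonneg_nonneg simp: less_imp_le)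

lemma lap_sym: "lap u v = lap v u"
  unfolding lap_def using bilin_sym[OF symmetric] by (simp add: mult_ac)

lemma lap_linear_left: "lap (\<lambda>a. \<alpha> * u a + \<beta> * v a) w = \<alpha> * lap u w + \<beta> * lap v w"
  unfolding lap_def bilin_linear_left
  by (simp add: algebra_simps sum.distrib sum_distrib_left)

lemma lap_linear_right: "lap w (\<lambda>a. \<alpha> * u a + \<beta> * v a) = \<alpha> * lap w u + \<beta> * lap w v"
  using lap_linear_left lap_sym by metis

lemma lap_cauchy_schwarz: "(lap u v)^2 \<le> lap u u * lap v v"
proof (rule quadratic_nonneg_discriminant)
  fix t
  have "lap (\<lambda>a. 1 * u a + t * v a) (\<lambda>a. 1 * u a + t * v a) = lap u u + 2 * t * lap u v + t^2 * lap v v"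
    unfolding lap_linear_left lap_linear_right using lap_sym[of v u]
    by (simp add: power2_eq_square algebra_simps)
  then show "0 \<le> lap u u + 2 * t * lap u v + t^2 * lap v v" using lap_nonneg by metis
qed (rule lap_nonneg)

lemma lap_range_p_orthogonal: "(\<Sum>a\<in>N. p a * (weight a * w a - matvec N H w a)) = 0"
proof -
  have "(\<Sum>a\<in>N. p a * (weight a * w a)) = bilin N H w p"
    unfolding bilin_matvec using weight_times_p by (intro sum.cong refl) (simp add: mult_ac)
  moreover have "(\<Sum>a\<in>N. p a * matvec N H w a) = bilin N H p w"
    unfolding bilin_matvec ..
  ultimately show ?thesis using bilin_sym[OF symmetric, of w p] by (simp add: algebra_simps sum_subtractf)
qed

text \<open>If L w = D z, then under the domination hypothesis the Laplacian form of w is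
  bounded by the D-norm of z: expand the D-norm of z = w - D^-1 H w.\<close>
lemma lap_preimage_le:
  assumes dominated: "bilin N H w w \<le> (\<Sum>a\<in>N. (matvec N H w a)^2 / weight a)"
    and w: "\<And>a. a \<in> N \<Longrightarrow> weight a * w a - matvec N H w a = weight a * z a"
  shows "lap w w \<le> (\<Sum>a\<in>N. weight a * z a * z a)"
proof -
  have "(\<Sum>a\<in>N. weight a * z a * z a)
      = (\<Sum>a\<in>N. weight a * w a * w a - 2 * (w a * matvec N H w a) + (matvec N H w a)^2 / weight a)"
  proof (intro sum.cong refl)
    fix a assume a: "a \<in> N"
    have "weight a * z a = weight a * w a - matvec N H w a" using w[OF a] by simp
    then have z_a: "z a = w a - matvec N H w a / weight a"
      using weight_pos[OF a] by (simp add: field_simps)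
    show "weight a * z a * z a
        = weight a * w a * w a - 2 * (w a * matvec N H w a) + (matvec N H w a)^2 / weight a"
      unfolding z_a using weight_pos[OF a] by (simp add: field_simps power2_eq_square)
  qed
  also have "\<dots> = lap w w - bilin N H w w + (\<Sum>a\<in>N. (matvec N H w a)^2 / weight a)"
    unfolding lap_def bilin_matvec by (simp add: sum.distrib sum_subtractf sum_distrib_left sum_negf)
  finally show ?thesis using dominated by linarith
qed

end

text \<open>If moreover some vertex y is adjacent to every vertex, the graph is connected, so the
  kernel of L is spanned by p and L is onto the orthogonal complement of p.\<close>
locale connected_weighting = nonneg_weighting +
  fixes y :: 'a
  assumes y_in: "y \<in> N" and y_adjacent: "\<And>a. a \<in> N \<Longrightarrow> 0 < H y a"
begin

lemma lap_kernel:
  assumes "lap w w = 0" and a: "a \<in> N"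
  shows "w a = (w y / p y) * p a"
proof -
  define summand where "summand a b = H a b * p a * p b * (w a / p a - w b / p b)^2" for a b
  have summand_nonneg: "0 \<le> summand a b" if "a \<in> N" "b \<in> N" for a b
    unfolding summand_def using that nonneg p_pos by (auto intro!: mult_nonneg_nonneg simp: less_imp_le)
  have "(\<Sum>a\<in>N. \<Sum>b\<in>N. summand a b) = 0"
    using assms(1) unfolding lap_sum_squares summand_def by simp
  then have "(\<Sum>b\<in>N. summand y b) = 0"
    using finite_N summand_nonneg y_in by (subst (asm) sum_nonneg_eq_0_iff) (auto intro!: sum_nonneg)
  then have "summand y a = 0"
    using finite_N summand_nonneg a y_in by (subst (asm) sum_nonneg_eq_0_iff) auto
  then have "w y / p y = w a / p a"
    unfolding summand_def using y_adjacent[OF a] p_pos[OF a] p_pos[OF y_in] by simp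
  then show ?thesis using p_nonzero[OF a] by (simp add: field_simps)
qed

lemma sum_p_squared_pos: "0 < (\<Sum>a\<in>N. p a * p a)"
  using finite_N y_in p_pos by (intro sum_pos2[of N y]) auto

text \<open>L w = r is solvable whenever r is orthogonal to p: the perturbation L + p p^T is
  injective, hence onto, and the correction term vanishes for such r.\<close>
lemma lap_solvable:
  assumes r: "(\<Sum>a\<in>N. p a * r a) = 0"
  shows "\<exists>w. \<forall>a\<in>N. weight a * w a - matvec N H w a = r a"
proof -
  define K where "K a b = (if a = b then weight a else 0) - H a b + p a * p b" for a b
  have K_apply: "(\<Sum>b\<in>N. K a b * w b) = weight a * w a - matvec N H w a + p a * (\<Sum>b\<in>N. p b * w b)"
    if "a \<in> N" for a w
  proof -
    have "(\<Sum>b\<in>N. K a b * w b)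
        = (\<Sum>b\<in>N. (if a = b then weight a * w b else 0) - H a b * w b + p a * (p b * w b))"
      by (intro sum.cong refl) (simp add: K_def algebra_simps)
    then show ?thesis
      using that finite_N by (simp add: matvec_def sum.distrib sum_subtractf sum_distrib_left)
  qed
  \<comment> \<open>Pairing with p kills the Laplacian part, leaving the rank-one correction.\<close>
  have K_pair: "(\<Sum>a\<in>N. p a * (\<Sum>b\<in>N. K a b * w b)) = (\<Sum>b\<in>N. p b * w b) * (\<Sum>a\<in>N. p a * p a)" for w
  proof -
    have "(\<Sum>a\<in>N. p a * (\<Sum>b\<in>N. K a b * w b))
        = (\<Sum>a\<in>N. p a * (weight a * w a - matvec N H w a)) + (\<Sum>a\<in>N. (\<Sum>b\<in>N. p b * w b) * (p a * p a))"
      unfolding sum.distrib[symmetric]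
    proof (intro sum.cong refl)
      fix a assume "a \<in> N"
      then show "p a * (\<Sum>b\<in>N. K a b * w b)
          = p a * (weight a * w a - matvec N H w a) + (\<Sum>b\<in>N. p b * w b) * (p a * p a)"
        unfolding K_apply[OF \<open>a \<in> N\<close>] by (simp add: algebra_simps)
    qed
    then show ?thesis using lap_range_p_orthogonal by (simp add: sum_distrib_left)
  qed
  have K_injective: "\<forall>a\<in>N. w a = 0" if Kw: "\<forall>a\<in>N. (\<Sum>b\<in>N. K a b * w b) = 0" for w
  proof -
    have pw: "(\<Sum>b\<in>N. p b * w b) = 0"
      using K_pair[of w] Kw sum_p_squared_pos by simp
    then have "lap w w = 0" unfolding lap_matvec using Kw K_apply by simp
    then have w_p: "w a = (w y / p y) * p a" if "a \<in> N" for a using lap_kernel that by blast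
    then have "(w y / p y) * (\<Sum>a\<in>N. p a * p a) = 0"
      using pw by (simp add: sum_distrib_left mult_ac)
    then have scale: "w y / p y = 0" using sum_p_squared_pos by simp
    show ?thesis using w_p unfolding scale by simp
  qed
  obtain w where w: "\<forall>a\<in>N. (\<Sum>b\<in>N. K a b * w b) = r a"
    using linear_system_solvable_if_injective[OF finite_N K_injective] by blast
  have "(\<Sum>b\<in>N. p b * w b) * (\<Sum>a\<in>N. p a * p a) = 0"
    using K_pair[of w] w r by simp
  then have "(\<Sum>b\<in>N. p b * w b) = 0" using sum_p_squared_pos by simp
  then show ?thesis using w K_apply by auto
qed

lemma neg_semidefinite_on_p_orthogonal:
  assumes dominated: "\<And>z. bilin N H z z \<le> (\<Sum>a\<in>N. (matvec N H z a)^2 / weight a)"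
    and pz: "bilin N H p z = 0"
  shows "bilin N H z z \<le> 0"
proof -
  have "(\<Sum>a\<in>N. p a * (weight a * z a)) = (\<Sum>a\<in>N. z a * matvec N H p a)"
    by (intro sum.cong refl) (simp add: weight_times_p[symmetric] mult_ac)
  also have "\<dots> = 0"
    using pz bilin_sym[OF symmetric, of p z] unfolding bilin_matvec by simp
  finally have "(\<Sum>a\<in>N. p a * (weight a * z a)) = 0" .
  then obtain w where "\<forall>a\<in>N. weight a * w a - matvec N H w a = weight a * z a"
    using lap_solvable[of "\<lambda>a. weight a * z a"] by blast
  then have w: "weight a * w a - matvec N H w a = weight a * z a" if "a \<in> N" for a
    using that by blast
  define Z where "Z = (\<Sum>a\<in>N. weight a * z a * z a)"
  have Z_nonneg: "0 \<le> Z"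
    unfolding Z_def using weight_pos by (intro sum_nonneg) (simp add: less_imp_le mult.assoc)
  have lap_zw: "lap z w = Z"
    unfolding lap_matvec Z_def
  proof (intro sum.cong refl)
    fix a assume "a \<in> N"
    then show "z a * (weight a * w a - matvec N H w a) = weight a * z a * z a"
      unfolding w[OF \<open>a \<in> N\<close>] by simp
  qed
  have lap_zz: "lap z z = Z - bilin N H z z"
    unfolding lap_def Z_def ..
  have lap_ww: "lap w w \<le> Z"
    unfolding Z_def using dominated w by (rule lap_preimage_le)
  have "Z^2 \<le> lap z z * Z"
  proof -
    have "Z^2 \<le> lap z z * lap w w" using lap_cauchy_schwarz[of z w] lap_zw by simp
    also have "\<dots> \<le> lap z z * Z" using lap_ww lap_nonneg[of z] by (rule mult_left_mono)
    finally show ?thesis .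
  qed
  show ?thesis
  proof (cases "Z = 0")
    case True
    then have "\<forall>a\<in>N. weight a * z a * z a = 0"
      using finite_N weight_pos unfolding Z_def
      by (subst (asm) sum_nonneg_eq_0_iff) (auto simp: less_imp_le mult.assoc)
    then have "\<forall>a\<in>N. z a = 0" using weight_pos by force
    then show ?thesis unfolding bilin_def by simp
  next
    case False
    then have "Z \<le> lap z z" using \<open>Z^2 \<le> lap z z * Z\<close> Z_nonneg by (simp add: power2_eq_square)
    then show ?thesis unfolding lap_zz by simp
  qed
qed

lemma hyperbolic_if_dominated:
  assumes dominated: "\<And>z. bilin N H z z \<le> (\<Sum>a\<in>N. (matvec N H z a)^2 / weight a)"
  shows "hyperbolic N H"
proof (rule hyperbolicI[OF symmetric])
  show "0 < bilin N H p p"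
    unfolding bilin_matvec using finite_N y_in p_pos Hp_pos by (intro sum_pos) auto
  show "bilin N H z z \<le> 0" if "bilin N H p z = 0" for z
    using neg_semidefinite_on_p_orthogonal[OF dominated that] .
qed

text \<open>The inductive step of the theory of Lorentzian polynomials, in linear-algebra form:
  if mu times the form of H is the p-weighted average of forms G c that are hyperbolic
  and whose p-row is the c-th row of mu times H, then H is hyperbolic.\<close>
lemma hyperbolic_if_derivatives_hyperbolic:
  fixes G :: "'a \<Rightarrow> 'a \<Rightarrow> 'a \<Rightarrow> real" and \<mu> :: real
  assumes \<mu>: "0 < \<mu>"
    and G_hyperbolic: "\<And>c. c \<in> N \<Longrightarrow> hyperbolic N (G c)"
    and G_p: "\<And>c v. c \<in> N \<Longrightarrow> bilin N (G c) p v = \<mu> * matvec N H v c"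
    and decompose: "\<And>z. \<mu> * bilin N H z z = (\<Sum>c\<in>N. p c * bilin N (G c) z z)"
  shows "hyperbolic N H"
proof (rule hyperbolic_if_dominated)
  fix z
  have each: "p c * bilin N (G c) z z \<le> \<mu> * ((matvec N H z c)^2 / weight c)" if c: "c \<in> N" for c
  proof -
    have pp: "0 < bilin N (G c) p p" using G_p[OF c] \<mu> Hp_pos[OF c] by simp
    have "bilin N (G c) p p * bilin N (G c) z z \<le> (bilin N (G c) p z)^2"
      using G_hyperbolic[OF c] pp unfolding hyperbolic_def by blast
    then have "\<mu> * matvec N H p c * bilin N (G c) z z \<le> \<mu> * (\<mu> * (matvec N H z c)^2)"
      unfolding G_p[OF c] by (simp add: power2_eq_square mult_ac)
    then have "matvec N H p c * bilin N (G c) z z \<le> \<mu> * (matvec N H z c)^2"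
      using \<mu> by (simp add: mult.assoc)
    moreover have "p c * bilin N (G c) z z = matvec N H p c * bilin N (G c) z z / weight c"
      using weight_times_p[OF c] weight_pos[OF c] by (simp add: field_simps)
    ultimately show ?thesis
      using weight_pos[OF c] by (simp add: divide_right_mono)
  qed
  have "\<mu> * bilin N H z z \<le> \<mu> * (\<Sum>a\<in>N. (matvec N H z a)^2 / weight a)"
    unfolding decompose sum_distrib_left using each by (rule sum_mono)
  then show "bilin N H z z \<le> (\<Sum>a\<in>N. (matvec N H z a)^2 / weight a)" using \<mu> by simp
qed

end

lemma matroid_finite_ground: "matroid E D \<Longrightarrow> finite E"
  and matroid_subset_Pow: "matroid E D \<Longrightarrow> D \<subseteq> Pow E"
  and matroid_empty_indep: "matroid E D \<Longrightarrow> {} \<in> D"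
  and matroid_down_closed: "matroid E D \<Longrightarrow> B \<in> D \<Longrightarrow> A \<subseteq> B \<Longrightarrow> A \<in> D"
  and matroid_exchange: "matroid E D \<Longrightarrow> A \<in> D \<Longrightarrow> B \<in> D \<Longrightarrow> card A < card B \<Longrightarrow>
        \<exists>x\<in>B - A. insert x A \<in> D"
  unfolding matroid_def by blast+

lemma family_finite: "finite E \<Longrightarrow> D \<subseteq> Pow E \<Longrightarrow> finite D"
  by (meson finite_Pow_iff finite_subset)

lemma family_member_finite: "finite E \<Longrightarrow> D \<subseteq> Pow E \<Longrightarrow> I \<in> D \<Longrightarrow> finite I"
  by (meson PowD finite_subset subsetD)

definition contraction :: "'e set set \<Rightarrow> 'e \<Rightarrow> 'e set set" where
  "contraction D k = {A. k \<notin> A \<and> insert k A \<in> D}"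

lemma contraction_subset_Pow: "D \<subseteq> Pow E \<Longrightarrow> contraction D k \<subseteq> Pow E"
  unfolding contraction_def by auto

lemma contraction_comm: "contraction (contraction D a) b = contraction (contraction D b) a"
  unfolding contraction_def by (auto simp: insert_commute)

lemma matroid_contraction:
  assumes M: "matroid E D" and k: "{k} \<in> D"
  shows "matroid E (contraction D k)"
  unfolding matroid_def
proof (intro conjI allI impI)
  show "finite E" using matroid_finite_ground[OF M] .
  show "contraction D k \<subseteq> Pow E" using contraction_subset_Pow[OF matroid_subset_Pow[OF M]] .
  show "{} \<in> contraction D k" unfolding contraction_def using k by simp
next
  fix A B assume "B \<in> contraction D k \<and> A \<subseteq> B"
  then show "A \<in> contraction D k"
    unfolding contraction_def using matroid_down_closed[OF M, of "insert k B" "insert k A"] by auto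
next
  fix A B assume AB: "A \<in> contraction D k \<and> B \<in> contraction D k \<and> card A < card B"
  then have A: "k \<notin> A" "insert k A \<in> D" and B: "k \<notin> B" "insert k B \<in> D"
    unfolding contraction_def by auto
  have "finite A" "finite B"
    using family_member_finite[OF matroid_finite_ground[OF M] matroid_subset_Pow[OF M]] A(2) B(2)
    by (metis finite_insert)+
  then have "card (insert k A) < card (insert k B)" using AB A B by simp
  then obtain x where "x \<in> insert k B - insert k A" "insert x (insert k A) \<in> D"
    using matroid_exchange[OF M A(2) B(2)] by blast
  then show "\<exists>x\<in>B - A. insert x A \<in> contraction D k"
    unfolding contraction_def using A by (auto simp: insert_commute)
qed

text \<open>The variables of the generating polynomial are y (None) and x_k (Some k).  Differentiating
  in y leaves the set system unchanged, differentiating in x_k contracts k.\<close>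
definition dfam :: "'e set set \<Rightarrow> 'e option \<Rightarrow> 'e set set" where
  "dfam D c = (case c of None \<Rightarrow> D | Some k \<Rightarrow> contraction D k)"

lemma dfam_None [simp]: "dfam D None = D"
  and dfam_Some [simp]: "dfam D (Some k) = contraction D k"
  unfolding dfam_def by simp_all

lemma dfam_subset_Pow: "D \<subseteq> Pow E \<Longrightarrow> dfam D c \<subseteq> Pow E"
  by (cases c) (auto dest: contraction_subset_Pow)

lemma dfam_comm: "dfam (dfam D a) b = dfam (dfam D b) a"
  by (cases a; cases b) (auto simp: contraction_comm)

lemma dfam_emptyset [simp]: "dfam {} c = {}"
  unfolding dfam_def contraction_def by (cases c) auto

text \<open>A derivative of the generating polynomial of a matroid is either that of a matroid or zero.\<close>
lemma dfam_matroid: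
  assumes M: "matroid E D" and "{} \<in> dfam D c"
  shows "matroid E (dfam D c)"
  using assms matroid_contraction[OF M] by (cases c) (auto simp: contraction_def)

lemma dfam_eq_empty:
  assumes M: "matroid E D" and "{} \<notin> dfam D c"
  shows "dfam D c = {}"
proof (cases c)
  case None then show ?thesis using assms matroid_empty_indep[OF M] by simp
next
  case (Some k)
  then have "{k} \<notin> D" using assms by (simp add: contraction_def)
  then show ?thesis
    using Some matroid_down_closed[OF M, of _ "{k}"] by (auto simp: contraction_def)
qed

definition vars :: "'e set \<Rightarrow> 'e option set" where
  "vars E = insert None (Some ` E)"

lemma finite_vars: "finite E \<Longrightarrow> finite (vars E)"
  unfolding vars_def by simp

lemma sum_vars:
  assumes "finite E"
  shows "(\<Sum>c\<in>vars E. f c) = f None + (\<Sum>k\<in>E. f (Some k))"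
  unfolding vars_def using assms by (simp add: sum.reindex)

definition gterm :: "nat \<Rightarrow> ('e option \<Rightarrow> real) \<Rightarrow> 'e set \<Rightarrow> real" where
  "gterm d p I = p None ^ (d - card I) / fact (d - card I) * (\<Prod>e\<in>I. p (Some e))"

definition genpoly :: "'e set set \<Rightarrow> nat \<Rightarrow> ('e option \<Rightarrow> real) \<Rightarrow> real" where
  "genpoly D d p = (\<Sum>I\<in>{I\<in>D. card I \<le> d}. gterm d p I)"

lemma gterm_nonneg: "(\<And>c. 0 < p c) \<Longrightarrow> 0 \<le> gterm d p I"
  unfolding gterm_def
  by (intro mult_nonneg_nonneg divide_nonneg_pos prod_nonneg zero_le_power) (auto simp: less_imp_le)

lemma genpoly_nonneg: "(\<And>c. 0 < p c) \<Longrightarrow> 0 \<le> genpoly D d p"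
  unfolding genpoly_def by (intro sum_nonneg gterm_nonneg)

lemma genpoly_emptyset [simp]: "genpoly {} d p = 0"
  unfolding genpoly_def by simp

lemma genpoly_pos:
  assumes "finite D" "{} \<in> D" "\<And>c. 0 < p c"
  shows "0 < genpoly D d p"
  unfolding genpoly_def
  using assms gterm_nonneg by (intro sum_pos2[where i="{}"]) (auto simp: gterm_def)

lemma genpoly_degree_0:
  assumes "finite E" "D \<subseteq> Pow E"
  shows "genpoly D 0 p = (if {} \<in> D then 1 else 0)"
proof -
  have "{I \<in> D. card I \<le> 0} = D \<inter> {{}}"
    using family_member_finite[OF assms] by (auto simp: card_eq_0_iff)
  then show ?thesis unfolding genpoly_def gterm_def by auto
qed

lemma gterm_insert:
  assumes "finite A" "k \<notin> A"
  shows "gterm d p (insert k A) = p (Some k) * gterm (d - 1) p A"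
proof -
  have "d - card (insert k A) = d - 1 - card A" using assms by simp
  then show ?thesis unfolding gterm_def using assms by simp
qed

text \<open>Applying y d/dy to the polynomial.\<close>
lemma genpoly_y_part:
  assumes "finite D" and d: "1 \<le> d"
  shows "(\<Sum>I\<in>{I\<in>D. card I \<le> d}. real (d - card I) * gterm d p I) = p None * genpoly D (d - 1) p"
proof -
  have "(\<Sum>I\<in>{I\<in>D. card I \<le> d}. real (d - card I) * gterm d p I)
      = (\<Sum>I\<in>{I\<in>D. card I \<le> d - 1}. real (d - card I) * gterm d p I)"
    using assms by (intro sum.mono_neutral_right) auto
  also have "\<dots> = (\<Sum>I\<in>{I\<in>D. card I \<le> d - 1}. p None * gterm (d - 1) p I)"
  proof (intro sum.cong refl)
    fix I assume "I \<in> {I\<in>D. card I \<le> d - 1}"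
    define n where "n = d - 1 - card I"
    have n: "d - card I = Suc n" "d - 1 - card I = n"
      using \<open>I \<in> {I\<in>D. card I \<le> d - 1}\<close> d unfolding n_def by auto
    show "real (d - card I) * gterm d p I = p None * gterm (d - 1) p I"
      unfolding gterm_def n by (simp add: field_simps del: of_nat_Suc)
  qed
  also have "\<dots> = p None * genpoly D (d - 1) p"
    unfolding genpoly_def by (simp add: sum_distrib_left)
  finally show ?thesis .
qed

lemma insert_image_contraction:
  assumes fE: "finite E" and DE: "D \<subseteq> Pow E" and d: "1 \<le> d"
  shows "{I\<in>D. card I \<le> d \<and> k \<in> I} = insert k ` {A\<in>contraction D k. card A \<le> d - 1}"
proof (rule Set.set_eqI, rule iffI)
  fix I assume I: "I \<in> {I\<in>D. card I \<le> d \<and> k \<in> I}"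
  then have "I - {k} \<in> {A\<in>contraction D k. card A \<le> d - 1}"
    unfolding contraction_def using family_member_finite[OF fE DE] by (auto simp: insert_absorb)
  moreover have "I = insert k (I - {k})" using I by auto
  ultimately show "I \<in> insert k ` {A\<in>contraction D k. card A \<le> d - 1}" by blast
next
  fix I assume "I \<in> insert k ` {A\<in>contraction D k. card A \<le> d - 1}"
  then obtain A where A: "k \<notin> A" "insert k A \<in> D" "card A \<le> d - 1" "I = insert k A"
    unfolding contraction_def by auto
  moreover have "finite A" using family_member_finite[OF fE DE A(2)] by simp
  ultimately show "I \<in> {I\<in>D. card I \<le> d \<and> k \<in> I}" using d by auto
qed

text \<open>Applying the sum of x_k d/dx_k to the polynomial.\<close>
lemma genpoly_x_part:
  assumes fE: "finite E" and DE: "D \<subseteq> Pow E" and d: "1 \<le> d"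
  shows "(\<Sum>I\<in>{I\<in>D. card I \<le> d}. real (card I) * gterm d p I)
       = (\<Sum>k\<in>E. p (Some k) * genpoly (contraction D k) (d - 1) p)"
proof -
  define X where "X = {I\<in>D. card I \<le> d}"
  have fX: "finite X" unfolding X_def using family_finite[OF fE DE] by simp
  have "(\<Sum>I\<in>X. real (card I) * gterm d p I) = (\<Sum>I\<in>X. \<Sum>k\<in>{k. k \<in> E \<and> k \<in> I}. gterm d p I)"
  proof (intro sum.cong refl)
    fix I assume "I \<in> X"
    then have "{k. k \<in> E \<and> k \<in> I} = I" using DE unfolding X_def by auto
    then show "real (card I) * gterm d p I = (\<Sum>k\<in>{k. k \<in> E \<and> k \<in> I}. gterm d p I)" by simp
  qed
  also have "\<dots> = (\<Sum>k\<in>E. \<Sum>I\<in>{I. I \<in> X \<and> k \<in> I}. gterm d p I)"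
    by (rule sum.swap_restrict[OF fX fE])
  also have "\<dots> = (\<Sum>k\<in>E. p (Some k) * genpoly (contraction D k) (d - 1) p)"
  proof (intro sum.cong refl)
    fix k
    define Y where "Y = {A\<in>contraction D k. card A \<le> d - 1}"
    have "{I. I \<in> X \<and> k \<in> I} = insert k ` Y"
      using insert_image_contraction[OF fE DE d, of k] unfolding X_def Y_def by auto
    moreover have "inj_on (insert k) Y"
      unfolding Y_def contraction_def inj_on_def by (metis (no_types, lifting) insert_ident mem_Collect_eq)
    moreover have "gterm d p (insert k A) = p (Some k) * gterm (d - 1) p A" if "A \<in> Y" for A
    proof -
      have A: "k \<notin> A" "insert k A \<in> D" using that unfolding Y_def contraction_def by auto
      then have "finite A" using family_member_finite[OF fE DE A(2)] by simp
      then show ?thesis using A(1) by (rule gterm_insert)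
    qed
    ultimately show "(\<Sum>I\<in>{I. I \<in> X \<and> k \<in> I}. gterm d p I)
        = p (Some k) * genpoly (contraction D k) (d - 1) p"
      unfolding genpoly_def Y_def[symmetric] by (simp add: sum.reindex sum_distrib_left)
  qed
  finally show ?thesis unfolding X_def .
qed

text \<open>Euler's identity for the homogeneous polynomial of degree d:
  d times its value is the p-weighted sum of its partial derivatives.\<close>
lemma genpoly_euler:
  assumes fE: "finite E" and DE: "D \<subseteq> Pow E" and d: "1 \<le> d"
  shows "real d * genpoly D d p = (\<Sum>c\<in>vars E. p c * genpoly (dfam D c) (d - 1) p)"
proof -
  have "real d * genpoly D d p
      = (\<Sum>I\<in>{I\<in>D. card I \<le> d}. real (d - card I) * gterm d p I)
        + (\<Sum>I\<in>{I\<in>D. card I \<le> d}. real (card I) * gterm d p I)"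
    unfolding genpoly_def sum_distrib_left sum.distrib[symmetric]
    by (intro sum.cong refl) (auto simp: of_nat_diff algebra_simps)
  also have "\<dots> = p None * genpoly D (d - 1) p + (\<Sum>k\<in>E. p (Some k) * genpoly (contraction D k) (d - 1) p)"
    unfolding genpoly_y_part[OF family_finite[OF fE DE] d] genpoly_x_part[OF assms] ..
  also have "\<dots> = (\<Sum>c\<in>vars E. p c * genpoly (dfam D c) (d - 1) p)"
    unfolding sum_vars[OF fE] by simp
  finally show ?thesis .
qed

definition hessian :: "'e set set \<Rightarrow> nat \<Rightarrow> ('e option \<Rightarrow> real) \<Rightarrow> 'e option \<Rightarrow> 'e option \<Rightarrow> real" where
  "hessian D m p a b = genpoly (dfam (dfam D a) b) (m - 2) p"

lemma hessian_sym: "hessian D m p a b = hessian D m p b a"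
  unfolding hessian_def by (simp add: dfam_comm)

text \<open>Euler's identity for the first derivatives: the Hessian maps p to (m - 1) times the gradient.\<close>
lemma hessian_row:
  assumes "finite E" "D \<subseteq> Pow E" "2 \<le> m"
  shows "matvec (vars E) (hessian D m p) p a = real (m - 1) * genpoly (dfam D a) (m - 1) p"
proof -
  have "real (m - 1) * genpoly (dfam D a) (m - 1) p
      = (\<Sum>c\<in>vars E. p c * genpoly (dfam (dfam D a) c) (m - 1 - 1) p)"
    using assms(3) by (intro genpoly_euler[OF assms(1) dfam_subset_Pow[OF assms(2)]]) simp
  also have "\<dots> = matvec (vars E) (hessian D m p) p a"
    unfolding matvec_def hessian_def by (simp add: mult.commute numeral_2_eq_2)
  finally show ?thesis by simp
qed

text \<open>Euler's identity for the second derivatives.\<close>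
lemma hessian_euler:
  assumes "finite E" "D \<subseteq> Pow E" "3 \<le> m"
  shows "real (m - 2) * hessian D m p a b = (\<Sum>c\<in>vars E. p c * hessian (dfam D c) (m - 1) p a b)"
proof -
  have "real (m - 2) * hessian D m p a b
      = (\<Sum>c\<in>vars E. p c * genpoly (dfam (dfam (dfam D a) b) c) (m - 2 - 1) p)"
    unfolding hessian_def using assms(3)
    by (intro genpoly_euler[OF assms(1) dfam_subset_Pow[OF dfam_subset_Pow[OF assms(2)]]]) simp
  also have "\<dots> = (\<Sum>c\<in>vars E. p c * hessian (dfam D c) (m - 1) p a b)"
  proof (intro sum.cong refl)
    fix c
    have "dfam (dfam (dfam D a) b) c = dfam (dfam (dfam D a) c) b" by (rule dfam_comm)
    also have "dfam (dfam D a) c = dfam (dfam D c) a" by (rule dfam_comm)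
    finally have fam: "dfam (dfam (dfam D a) b) c = dfam (dfam (dfam D c) a) b" .
    have deg: "m - 2 - 1 = m - 1 - 2" by simp
    show "p c * genpoly (dfam (dfam (dfam D a) b) c) (m - 2 - 1) p
        = p c * hessian (dfam D c) (m - 1) p a b"
      unfolding hessian_def fam deg ..
  qed
  finally show ?thesis .
qed

definition parallel :: "'e set set \<Rightarrow> 'e \<Rightarrow> 'e \<Rightarrow> bool" where
  "parallel D k k' \<longleftrightarrow> k = k' \<or> {k, k'} \<notin> D"

lemma parallel_trans:
  assumes M: "matroid E D" and b: "{b} \<in> D"
    and ab: "parallel D a b" and bc: "parallel D b c"
  shows "parallel D a c"
proof (rule ccontr)
  assume "\<not> parallel D a c"
  then have ac: "a \<noteq> c" "{a, c} \<in> D" unfolding parallel_def by auto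
  then have "card {b} < card {a, c}" by simp
  then obtain e where e: "e \<in> {a, c} - {b}" "insert e {b} \<in> D"
    using matroid_exchange[OF M b ac(2)] by blast
  then show False using ab bc by (auto simp: parallel_def insert_commute)
qed

text \<open>A symmetric matrix that is the indicator of an equivalence relation is a sum of
  all-ones blocks, hence positive semidefinite.\<close>
lemma equivalence_block_psd:
  fixes u :: "'a \<Rightarrow> real"
  assumes fL: "finite L" and R_refl: "\<And>k. k \<in> L \<Longrightarrow> R k k"
    and R_sym: "\<And>k k'. k \<in> L \<Longrightarrow> k' \<in> L \<Longrightarrow> R k k' \<Longrightarrow> R k' k"
    and R_trans: "\<And>a b c. a \<in> L \<Longrightarrow> b \<in> L \<Longrightarrow> c \<in> L \<Longrightarrow> R a b \<Longrightarrow> R b c \<Longrightarrow> R a c"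
  shows "0 \<le> (\<Sum>k\<in>L. \<Sum>k'\<in>L. if R k k' then u k * u k' else 0)"
proof -
  define C where "C k = {k'. k' \<in> L \<and> R k k'}" for k
  define S where "S k = (\<Sum>k'\<in>C k. u k')" for k
  define c where "c k = real (card (C k))" for k
  have C_eq: "C k = C k'" if "k \<in> L" "k' \<in> L" "R k k'" for k k'
    unfolding C_def using that R_sym R_trans by blast
  have c_pos: "0 < c k" if "k \<in> L" for k
    unfolding c_def C_def using that R_refl fL by (auto simp: card_gt_0_iff)
  have "(\<Sum>k\<in>L. \<Sum>k'\<in>L. if R k k' then u k * u k' else 0) = (\<Sum>k\<in>L. u k * S k)"
    unfolding S_def C_def using fL
    by (intro sum.cong refl) (simp add: sum.inter_filter[symmetric] sum_distrib_left)
  \<comment> \<open>Each class contributes the square of its sum, counted once per member.\<close>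
  also have "\<dots> = (\<Sum>k\<in>L. (S k)^2 / c k)"
  proof -
    have "(\<Sum>k\<in>L. (S k)^2 / c k) = (\<Sum>k\<in>L. \<Sum>k'\<in>{k'. k' \<in> L \<and> R k k'}. u k' * S k / c k)"
      unfolding S_def C_def
      by (intro sum.cong refl) (simp add: power2_eq_square sum_distrib_right sum_divide_distrib)
    also have "\<dots> = (\<Sum>k'\<in>L. \<Sum>k\<in>{k. k \<in> L \<and> R k k'}. u k' * S k / c k)"
      by (rule sum.swap_restrict[OF fL fL])
    also have "\<dots> = (\<Sum>k'\<in>L. \<Sum>k\<in>C k'. u k' * S k' / c k')"
    proof (rule sum.cong[OF refl])
      fix k' assume k': "k' \<in> L"
      have "{k. k \<in> L \<and> R k k'} = C k'" unfolding C_def using R_sym k' by blast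
      moreover have "S k = S k'" "c k = c k'" if "k \<in> C k'" for k
        using that C_eq[of k k'] k' R_sym unfolding C_def S_def c_def by auto
      ultimately show "(\<Sum>k\<in>{k. k \<in> L \<and> R k k'}. u k' * S k / c k) = (\<Sum>k\<in>C k'. u k' * S k' / c k')"
        by (auto intro: sum.cong)
    qed
    also have "\<dots> = (\<Sum>k'\<in>L. u k' * S k')"
      using c_pos unfolding c_def by (intro sum.cong refl) simp
    finally show ?thesis by simp
  qed
  also have "\<dots> \<ge> 0" using c_pos by (intro sum_nonneg) (simp add: less_imp_le)
  finally show ?thesis .
qed

lemma hessian_degree_2:
  assumes M: "matroid E D"
  shows "hessian D 2 p None None = 1"
    and "hessian D 2 p None (Some k) = (if {k} \<in> D then 1 else 0)"
    and "hessian D 2 p (Some k) None = (if {k} \<in> D then 1 else 0)"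
    and "hessian D 2 p (Some k) (Some k') = (if parallel D k k' then 0 else 1)"
proof -
  have entry: "hessian D 2 p a b = (if {} \<in> dfam (dfam D a) b then 1 else 0)" for a b
    unfolding hessian_def using genpoly_degree_0[OF matroid_finite_ground[OF M]
      dfam_subset_Pow[OF dfam_subset_Pow[OF matroid_subset_Pow[OF M]]]] by simp
  show "hessian D 2 p None None = 1"
    "hessian D 2 p None (Some k) = (if {k} \<in> D then 1 else 0)"
    "hessian D 2 p (Some k) None = (if {k} \<in> D then 1 else 0)"
    "hessian D 2 p (Some k) (Some k') = (if parallel D k k' then 0 else 1)"
    unfolding entry using matroid_empty_indep[OF M] by (auto simp: contraction_def parallel_def)
qed

text \<open>Sums over non-parallel pairs only see non-loops, since an independent pair
  consists of two non-loops.\<close>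
lemma nonparallel_pairs_nonloops:
  assumes M: "matroid E D"
  defines "L \<equiv> {k\<in>E. {k} \<in> D}"
  shows "(\<Sum>k\<in>E. \<Sum>k'\<in>E. if parallel D k k' then 0 else f k k')
       = (\<Sum>k\<in>L. \<Sum>k'\<in>L. if parallel D k k' then 0 else f k k')"
proof -
  have fE: "finite E" using matroid_finite_ground[OF M] .
  have in_L: "k \<in> L" "k' \<in> L" if "\<not> parallel D k k'" "k \<in> E" "k' \<in> E" for k k'
    using that matroid_down_closed[OF M, of "{k, k'}"] unfolding L_def parallel_def by auto
  have "(\<Sum>k\<in>E. \<Sum>k'\<in>E. if parallel D k k' then 0 else f k k')
      = (\<Sum>k\<in>E. \<Sum>k'\<in>L. if parallel D k k' then 0 else f k k')"
    using fE in_L by (intro sum.cong refl sum.mono_neutral_right) (auto simp: L_def)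
  also have "\<dots> = (\<Sum>k\<in>L. \<Sum>k'\<in>L. if parallel D k k' then 0 else f k k')"
    using fE in_L
    by (intro sum.mono_neutral_right) (auto simp: L_def split: if_split_asm intro!: sum.neutral)
  finally show ?thesis .
qed

lemma hessian_2_quadratic_form:
  assumes M: "matroid E D"
  defines "L \<equiv> {k\<in>E. {k} \<in> D}"
  shows "bilin (vars E) (hessian D 2 p) z z
       = (z None + (\<Sum>k\<in>L. z (Some k)))^2
         - (\<Sum>k\<in>L. \<Sum>k'\<in>L. if parallel D k k' then z (Some k) * z (Some k') else 0)"
proof -
  define H where "H = hessian D 2 p"
  define u where "u k = z (Some k)" for k
  define S where "S = (\<Sum>k\<in>L. u k)"
  have fE: "finite E" using matroid_finite_ground[OF M] .
  have loops_vanish: "(\<Sum>k\<in>E. (if {k} \<in> D then 1 else 0) * u k) = S"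
    unfolding S_def L_def using fE by (simp add: sum.inter_filter if_distrib[of "\<lambda>c. c * _"] cong: if_cong)
  have pairs: "(\<Sum>k\<in>E. \<Sum>k'\<in>E. if parallel D k k' then 0 else u k * u k')
      = (\<Sum>k\<in>L. \<Sum>k'\<in>L. if parallel D k k' then 0 else u k * u k')"
    unfolding L_def by (rule nonparallel_pairs_nonloops[OF M])
  have "bilin (vars E) H z z = z None * z None * H None None
      + (\<Sum>k\<in>E. z None * H None (Some k) * u k) + (\<Sum>k\<in>E. u k * H (Some k) None * z None)
      + (\<Sum>k\<in>E. \<Sum>k'\<in>E. u k * H (Some k) (Some k') * u k')"
    unfolding bilin_def sum_vars[OF fE] u_def by (simp add: sum.distrib)
  also have "\<dots> = z None * z None + 2 * z None * S
      + (\<Sum>k\<in>L. \<Sum>k'\<in>L. if parallel D k k' then 0 else u k * u k')"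
  proof -
    have "(\<Sum>k\<in>E. z None * H None (Some k) * u k) = z None * S"
      "(\<Sum>k\<in>E. u k * H (Some k) None * z None) = z None * S"
      unfolding H_def hessian_degree_2[OF M] loops_vanish[symmetric]
      by (simp_all add: sum_distrib_left mult_ac)
    moreover have "(\<Sum>k\<in>E. \<Sum>k'\<in>E. u k * H (Some k) (Some k') * u k')
        = (\<Sum>k\<in>E. \<Sum>k'\<in>E. if parallel D k k' then 0 else u k * u k')"
      unfolding H_def hessian_degree_2[OF M] by (intro sum.cong refl) simp
    ultimately show ?thesis
      unfolding pairs[symmetric] H_def hessian_degree_2(1)[OF M] by simp
  qed
  also have "(\<Sum>k\<in>L. \<Sum>k'\<in>L. if parallel D k k' then 0 else u k * u k')
      = S * S - (\<Sum>k\<in>L. \<Sum>k'\<in>L. if parallel D k k' then u k * u k' else 0)"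
    unfolding S_def sum_product sum_subtractf[symmetric]
    by (intro sum.cong refl) simp
  finally show ?thesis
    unfolding H_def u_def S_def by (simp add: power2_eq_square algebra_simps)
qed

lemma hessian_2_hyperbolic:
  assumes M: "matroid E D"
  shows "hyperbolic (vars E) (hessian D 2 p)"
proof -
  define x :: "'a option \<Rightarrow> real" where "x a = (if a = None then 1 else 0)" for a
  define L where "L = {k\<in>E. {k} \<in> D}"
  have fE: "finite E" using matroid_finite_ground[OF M] .
  have x_row: "bilin (vars E) (hessian D 2 p) x z = z None + (\<Sum>k\<in>L. z (Some k))" for z
    unfolding bilin_def sum_vars[OF fE] x_def hessian_degree_2[OF M] L_def
    using fE by (simp add: sum.inter_filter if_distrib[of "\<lambda>c. c * _"] cong: if_cong)
  show ?thesis
  proof (rule hyperbolicI[where x = x])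
    show "symmetric_on (vars E) (hessian D 2 p)"
      unfolding symmetric_on_def using hessian_sym by blast
    show "0 < bilin (vars E) (hessian D 2 p) x x"
      unfolding x_row by (simp add: x_def)
  next
    fix z assume "bilin (vars E) (hessian D 2 p) x z = 0"
    then have "bilin (vars E) (hessian D 2 p) z z
        = - (\<Sum>k\<in>L. \<Sum>k'\<in>L. if parallel D k k' then z (Some k) * z (Some k') else 0)"
      unfolding hessian_2_quadratic_form[OF M] x_row L_def by simp
    moreover have "0 \<le> (\<Sum>k\<in>L. \<Sum>k'\<in>L. if parallel D k k' then z (Some k) * z (Some k') else 0)"
    proof (rule equivalence_block_psd)
      show "finite L" unfolding L_def using fE by simp
      show "parallel D k k" for k unfolding parallel_def by simp
      show "parallel D k' k" if "parallel D k k'" for k k'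
        using that unfolding parallel_def by (auto simp: insert_commute)
      show "parallel D a c" if "b \<in> L" "parallel D a b" "parallel D b c" for a b c
        using parallel_trans[OF M _ that(2,3)] that(1) unfolding L_def by blast
    qed
    ultimately show "bilin (vars E) (hessian D 2 p) z z \<le> 0" by simp
  qed
qed

lemma bilin_restrict:
  assumes I: "finite I" and NI: "N \<subseteq> I"
    and supp: "\<And>a b. a \<in> I \<Longrightarrow> b \<in> I \<Longrightarrow> H a b \<noteq> 0 \<Longrightarrow> a \<in> N \<and> b \<in> N"
  shows "bilin N H u v = bilin I H u v"
proof -
  have "bilin I H u v = (\<Sum>a\<in>N. \<Sum>b\<in>I. u a * H a b * v b)"
    unfolding bilin_def
  proof (rule sum.mono_neutral_right[OF I NI])
    show "\<forall>a\<in>I - N. (\<Sum>b\<in>I. u a * H a b * v b) = 0" using supp by fastforce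
  qed
  also have "\<dots> = bilin N H u v"
    unfolding bilin_def
  proof (rule sum.cong[OF refl], rule sum.mono_neutral_right[OF I NI])
    show "\<forall>b\<in>I - N. u a * H a b * v b = 0" if "a \<in> N" for a using supp that NI by fastforce
  qed
  finally show ?thesis by simp
qed

lemma matvec_restrict:
  assumes "finite I" "N \<subseteq> I" "a \<in> I"
    and supp: "\<And>a b. a \<in> I \<Longrightarrow> b \<in> I \<Longrightarrow> H a b \<noteq> 0 \<Longrightarrow> a \<in> N \<and> b \<in> N"
  shows "matvec N H v a = matvec I H v a"
  unfolding matvec_def using assms by (intro sum.mono_neutral_left) auto

lemma hyperbolic_restrict:
  assumes "finite I" "N \<subseteq> I"
    and "\<And>a b. a \<in> I \<Longrightarrow> b \<in> I \<Longrightarrow> H a b \<noteq> 0 \<Longrightarrow> a \<in> N \<and> b \<in> N"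
  shows "hyperbolic N H \<longleftrightarrow> hyperbolic I H"
  using bilin_restrict[OF assms] unfolding hyperbolic_def by simp

lemma bilin_weighted_sum:
  assumes "finite V" and "\<And>a b. \<mu> * H a b = (\<Sum>c\<in>V. p c * G c a b)"
  shows "\<mu> * bilin V H z z = (\<Sum>c\<in>V. p c * bilin V (G c) z z)"
proof -
  have "\<mu> * bilin V H z z = (\<Sum>a\<in>V. \<Sum>b\<in>V. z a * (\<mu> * H a b) * z b)"
    unfolding bilin_def sum_distrib_left by (simp add: mult_ac)
  also have "\<dots> = (\<Sum>a\<in>V. \<Sum>b\<in>V. \<Sum>c\<in>V. p c * (z a * G c a b * z b))"
    unfolding assms(2) by (simp add: sum_distrib_left sum_distrib_right mult_ac)
  also have "\<dots> = (\<Sum>c\<in>V. p c * bilin V (G c) z z)"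
    unfolding bilin_def sum_distrib_left by (subst sum.swap, subst (2) sum.swap) simp
  finally show ?thesis .
qed

text \<open>The variables on which the generating polynomial actually depends: y and the
  elements that are not loops.  All other rows and columns of the Hessians vanish.\<close>
definition active :: "'e set \<Rightarrow> 'e set set \<Rightarrow> 'e option set" where
  "active E D = {c\<in>vars E. {} \<in> dfam D c}"

lemma hessian_support:
  assumes M: "matroid E D" and ab: "a \<in> vars E" "b \<in> vars E"
    and nonzero: "genpoly (dfam (dfam (dfam D c) a) b) d p \<noteq> 0"
  shows "a \<in> active E D \<and> b \<in> active E D"
proof -
  have "dfam D a \<noteq> {}" "dfam D b \<noteq> {}"
    using nonzero dfam_comm[of "dfam D c" a b] dfam_comm[of D c] dfam_comm[of D a]
    by (metis dfam_emptyset genpoly_emptyset)+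
  then show ?thesis using dfam_eq_empty[OF M] ab unfolding active_def by blast
qed

lemma hessian_restrict_active:
  assumes M: "matroid E D"
  shows "bilin (active E D) (hessian (dfam D c) m p) u v = bilin (vars E) (hessian (dfam D c) m p) u v"
    and "a \<in> vars E \<Longrightarrow>
      matvec (active E D) (hessian (dfam D c) m p) v a = matvec (vars E) (hessian (dfam D c) m p) v a"
    and "hyperbolic (active E D) (hessian (dfam D c) m p) \<longleftrightarrow> hyperbolic (vars E) (hessian (dfam D c) m p)"
proof -
  have fV: "finite (vars E)" using finite_vars[OF matroid_finite_ground[OF M]] .
  have NV: "active E D \<subseteq> vars E" unfolding active_def by auto
  have supp: "a \<in> active E D \<and> b \<in> active E D"
    if "a \<in> vars E" "b \<in> vars E" "hessian (dfam D c) m p a b \<noteq> 0" for a b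
    using hessian_support[OF M that(1,2)] that(3) unfolding hessian_def by blast
  show "bilin (active E D) (hessian (dfam D c) m p) u v = bilin (vars E) (hessian (dfam D c) m p) u v"
    by (rule bilin_restrict[OF fV NV supp])
  show "matvec (active E D) (hessian (dfam D c) m p) v a = matvec (vars E) (hessian (dfam D c) m p) v a"
    if "a \<in> vars E"
    by (rule matvec_restrict[OF fV NV that supp])
  show "hyperbolic (active E D) (hessian (dfam D c) m p) \<longleftrightarrow> hyperbolic (vars E) (hessian (dfam D c) m p)"
    by (rule hyperbolic_restrict[OF fV NV supp])
qed

lemma hessian_contracted_row:
  assumes "finite E" "D \<subseteq> Pow E" "2 \<le> m"
  shows "matvec (vars E) (hessian (dfam D c) m p) p b = real (m - 1) * hessian D (Suc m) p c b"
  using hessian_row[OF assms(1) dfam_subset_Pow[OF assms(2)] assms(3), where p = p and a = b]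
  unfolding hessian_def by (simp add: numeral_2_eq_2)

lemma hessian_contracted_bilin:
  assumes "finite E" "D \<subseteq> Pow E" "2 \<le> m"
  shows "bilin (vars E) (hessian (dfam D c) m p) p v
       = real (m - 1) * matvec (vars E) (hessian D (Suc m) p) v c"
proof -
  have "bilin (vars E) (hessian (dfam D c) m p) p v
      = (\<Sum>b\<in>vars E. matvec (vars E) (hessian (dfam D c) m p) p b * v b)"
    unfolding bilin_def matvec_def sum_distrib_right
    by (subst sum.swap) (simp add: hessian_sym mult_ac)
  then show ?thesis
    by (simp only: hessian_contracted_row[OF assms]) (simp add: matvec_def sum_distrib_left mult_ac)
qed

lemma hessian_quadratic_decomposition:
  assumes "finite E" "D \<subseteq> Pow E" "2 \<le> m"
  shows "real (m - 1) * bilin (vars E) (hessian D (Suc m) p) z z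
       = (\<Sum>c\<in>vars E. p c * bilin (vars E) (hessian (dfam D c) m p) z z)"
  using hessian_euler[OF assms(1,2), where m = "Suc m" and p = p] assms(3)
  by (intro bilin_weighted_sum[OF finite_vars[OF assms(1)]]) simp

lemma hessian_connected_weighting:
  assumes M: "matroid E D" and m: "2 \<le> m" and p: "\<And>c. 0 < p c"
  shows "connected_weighting (active E D) (hessian D (Suc m) p) p None"
proof -
  have fE: "finite E" and DE: "D \<subseteq> Pow E"
    using matroid_finite_ground[OF M] matroid_subset_Pow[OF M] .
  have pos: "0 < genpoly (dfam D a) d p" if "a \<in> active E D" for a d
    using that genpoly_pos[OF family_finite[OF fE dfam_subset_Pow[OF DE]] _ p]
    unfolding active_def by auto
  show ?thesis
  proof
    show "finite (active E D)"
      using finite_vars[OF fE] unfolding active_def by simp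
    show "symmetric_on (active E D) (hessian D (Suc m) p)"
      unfolding symmetric_on_def using hessian_sym by blast
    show "0 \<le> hessian D (Suc m) p a b" for a b
      unfolding hessian_def using genpoly_nonneg p by blast
    show "0 < p a" for a by (rule p)
    show "0 < matvec (active E D) (hessian D (Suc m) p) p a" if "a \<in> active E D" for a
      using that pos[OF that] m hessian_restrict_active(2)[OF M, where c = None]
        hessian_row[OF fE DE, where m = "Suc m" and p = p and a = a]
      unfolding active_def by auto
    show "None \<in> active E D"
      unfolding active_def vars_def using matroid_empty_indep[OF M] by simp
    show "0 < hessian D (Suc m) p None a" if "a \<in> active E D" for a
      using pos[OF that] unfolding hessian_def by simp
  qed
qed

lemma hessian_step_hyperbolic:
  assumes IH: "\<And>D. matroid E D \<Longrightarrow> hyperbolic (vars E) (hessian D m p)"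
    and m: "2 \<le> m" and M: "matroid E D" and p: "\<And>c. 0 < p c"
  shows "hyperbolic (vars E) (hessian D (Suc m) p)"
proof -
  define N where "N = active E D"
  define H where "H = hessian D (Suc m) p"
  define G where "G c = hessian (dfam D c) m p" for c
  have fE: "finite E" and DE: "D \<subseteq> Pow E"
    using matroid_finite_ground[OF M] matroid_subset_Pow[OF M] .
  note H_restrict = hessian_restrict_active[OF M, where c = None, unfolded dfam_None]
  note G_restrict = hessian_restrict_active[OF M]
  interpret connected_weighting N H p None
    unfolding N_def H_def using hessian_connected_weighting[OF M m p] .
  have "hyperbolic N H"
  proof (rule hyperbolic_if_derivatives_hyperbolic)
    show "0 < real (m - 1)" using m by simp
    show "hyperbolic N (G c)" if "c \<in> N" for c
    proof -
      have "{} \<in> dfam D c" using that unfolding N_def active_def by simp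
      then show ?thesis unfolding N_def G_def G_restrict(3) by (rule IH[OF dfam_matroid[OF M]])
    qed
    show "bilin N (G c) p v = real (m - 1) * matvec N H v c" if "c \<in> N" for c v
    proof -
      have "c \<in> vars E" using that unfolding N_def active_def by simp
      show ?thesis
        unfolding N_def G_def H_def G_restrict(1) H_restrict(2)[OF \<open>c \<in> vars E\<close>]
        by (rule hessian_contracted_bilin[OF fE DE m])
    qed
    show "real (m - 1) * bilin N H z z = (\<Sum>c\<in>N. p c * bilin N (G c) z z)" for z
    proof -
      have "real (m - 1) * bilin (vars E) H z z = (\<Sum>c\<in>vars E. p c * bilin (vars E) (G c) z z)"
        unfolding H_def G_def by (rule hessian_quadratic_decomposition[OF fE DE m])
      also have "\<dots> = (\<Sum>c\<in>N. p c * bilin (vars E) (G c) z z)"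
      proof (rule sum.mono_neutral_right[OF finite_vars[OF fE]])
        show "N \<subseteq> vars E" unfolding N_def active_def by auto
        \<comment> \<open>Derivatives in inactive variables vanish identically.\<close>
        show "\<forall>c\<in>vars E - N. p c * bilin (vars E) (G c) z z = 0"
        proof
          fix c assume "c \<in> vars E - N"
          then have "dfam D c = {}" using dfam_eq_empty[OF M] unfolding N_def active_def by blast
          then show "p c * bilin (vars E) (G c) z z = 0" unfolding G_def hessian_def bilin_def by simp
        qed
      qed
      finally show ?thesis unfolding N_def G_def H_def H_restrict(1) G_restrict(1) .
    qed
  qed
  then show ?thesis unfolding N_def H_def H_restrict(3) .
qed

theorem hessian_hyperbolic:
  assumes "2 \<le> m" and "matroid E D" and "\<And>c. 0 < p c"
  shows "hyperbolic (vars E) (hessian D m p)"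
  using assms(1,2)
proof (induction m arbitrary: D rule: nat_induct_at_least)
  case base
  then show ?case by (rule hessian_2_hyperbolic)
next
  case (Suc m)
  show ?case by (rule hessian_step_hyperbolic[OF Suc.IH Suc.hyps Suc.prems assms(3)])
qed

definition ypoint :: "real \<Rightarrow> 'e option \<Rightarrow> real" where
  "ypoint t c = (if c = None then t else 1)"

lemma genpoly_ypoint:
  "genpoly D d (ypoint t) = (\<Sum>I\<in>{I\<in>D. card I \<le> d}. t ^ (d - card I) / fact (d - card I))"
  unfolding genpoly_def gterm_def ypoint_def by simp

text \<open>At t = 0 only the top-degree monomials survive: the value is an f-vector entry.\<close>
lemma genpoly_ypoint_0:
  assumes "finite E" "D \<subseteq> Pow E"
  shows "genpoly D d (ypoint 0) = real (fvec D d)"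
proof -
  have "genpoly D d (ypoint 0) = (\<Sum>I\<in>{I\<in>D. card I \<le> d}. if card I = d then 1 else 0)"
    unfolding genpoly_ypoint by (intro sum.cong refl) (auto simp: power_0_left)
  also have "\<dots> = real (card {I\<in>{I\<in>D. card I \<le> d}. card I = d})"
    using family_finite[OF assms] by (simp add: sum.inter_filter[symmetric])
  also have "{I\<in>{I\<in>D. card I \<le> d}. card I = d} = {I\<in>D. card I = d}" by auto
  finally show ?thesis unfolding fvec_def .
qed

text \<open>At y = 0 Euler's identity counts each independent set of size d once for
  each of its d elements.\<close>
lemma fvec_euler:
  assumes "finite E" "D \<subseteq> Pow E" "1 \<le> d"
  shows "real d * real (fvec D d) = (\<Sum>k\<in>E. real (fvec (contraction D k) (d - 1)))"
  using genpoly_euler[OF assms, where p = "ypoint 0"]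
  unfolding sum_vars[OF assms(1)]
  by (simp add: genpoly_ypoint_0[OF assms(1,2)] genpoly_ypoint_0[OF assms(1) contraction_subset_Pow[OF assms(2)]])
    (simp add: ypoint_def)

lemma nonneg_at_0_if_nonneg_right:
  fixes f :: "real \<Rightarrow> real"
  assumes "isCont f 0" and "\<And>t. 0 < t \<Longrightarrow> 0 \<le> f t"
  shows "0 \<le> f 0"
proof -
  have "(f \<longlongrightarrow> f 0) (at_right 0)"
    using assms(1) unfolding isCont_def by (rule tendsto_within_subset) simp
  moreover have "\<forall>\<^sub>F t in at_right 0. 0 \<le> f t"
    using eventually_at_right_less[of 0] by (rule eventually_mono) (use assms(2) in simp)
  ultimately show ?thesis
    by (rule tendsto_lowerbound) (simp add: trivial_limit_at_right_real)
qed

text \<open>Reverse Cauchy-Schwarz for the Hessian of degree i+1 at (t, 1, ..., 1), applied to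
  the coordinate vector of y and the all-ones vector on the ground set.\<close>
lemma hessian_log_concave_at:
  assumes M: "matroid E D" and i: "1 \<le> i" and t: "0 < t"
  shows "genpoly D (i - 1) (ypoint t)
           * (\<Sum>k\<in>E. \<Sum>k'\<in>E. genpoly (contraction (contraction D k) k') (i - 1) (ypoint t))
         \<le> (\<Sum>k\<in>E. genpoly (contraction D k) (i - 1) (ypoint t))^2"
proof -
  define z :: "'a option \<Rightarrow> real" where "z c = (if c = None then 1 else 0)" for c
  define w :: "'a option \<Rightarrow> real" where "w c = (if c = None then 0 else 1)" for c
  define H where "H = hessian D (i + 1) (ypoint t)"
  have fE: "finite E" using matroid_finite_ground[OF M] .
  have "hyperbolic (vars E) H"
    unfolding H_def using i t by (intro hessian_hyperbolic[OF _ M]) (auto simp: ypoint_def)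
  moreover have "bilin (vars E) H z z = genpoly D (i - 1) (ypoint t)"
    "bilin (vars E) H z w = (\<Sum>k\<in>E. genpoly (contraction D k) (i - 1) (ypoint t))"
    "bilin (vars E) H w w = (\<Sum>k\<in>E. \<Sum>k'\<in>E. genpoly (contraction (contraction D k) k') (i - 1) (ypoint t))"
    unfolding bilin_def sum_vars[OF fE] z_def w_def H_def hessian_def by simp_all
  moreover have "0 < genpoly D (i - 1) (ypoint t)"
    using genpoly_pos[OF family_finite[OF fE matroid_subset_Pow[OF M]] matroid_empty_indep[OF M]] t
    by (simp add: ypoint_def)
  ultimately show ?thesis unfolding hyperbolic_def by metis
qed

text \<open>Letting t tend to 0 turns the inequality into one between f-vector entries:
  (i + 1) f_(i-1) f_(i+1) \<le> i f_i^2.\<close>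
lemma fvec_mason_inequality:
  assumes M: "matroid E D" and i: "1 \<le> i"
  shows "real (i + 1) * (real (fvec D (i - 1)) * real (fvec D (i + 1))) \<le> real i * real (fvec D i)^2"
proof -
  have fE: "finite E" and DE: "D \<subseteq> Pow E"
    using matroid_finite_ground[OF M] matroid_subset_Pow[OF M] .
  define A where "A t = genpoly D (i - 1) (ypoint t)" for t
  define B where "B t = (\<Sum>k\<in>E. genpoly (contraction D k) (i - 1) (ypoint t))" for t
  define C where "C t = (\<Sum>k\<in>E. \<Sum>k'\<in>E. genpoly (contraction (contraction D k) k') (i - 1) (ypoint t))" for t
  have "isCont (\<lambda>t. (B t)^2 - A t * C t) 0"
    unfolding A_def B_def C_def genpoly_ypoint by (intro continuous_intros) auto
  then have "0 \<le> (B 0)^2 - A 0 * C 0"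
    by (rule nonneg_at_0_if_nonneg_right)
      (use hessian_log_concave_at[OF M i] in \<open>simp add: A_def B_def C_def\<close>)
  moreover have "A 0 = real (fvec D (i - 1))"
    unfolding A_def genpoly_ypoint_0[OF fE DE] ..
  moreover have "B 0 = real i * real (fvec D i)"
    unfolding B_def genpoly_ypoint_0[OF fE contraction_subset_Pow[OF DE]] fvec_euler[OF fE DE i] ..
  moreover have "C 0 = real i * (real (i + 1) * real (fvec D (i + 1)))"
  proof -
    have "C 0 = (\<Sum>k\<in>E. real i * real (fvec (contraction D k) i))"
      unfolding C_def genpoly_ypoint_0[OF fE contraction_subset_Pow[OF contraction_subset_Pow[OF DE]]]
      using fvec_euler[OF fE contraction_subset_Pow[OF DE] i] by simp
    also have "\<dots> = real i * (real (i + 1) * real (fvec D (i + 1)))"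
      using fvec_euler[OF fE DE, of "i + 1"] by (simp add: sum_distrib_left)
    finally show ?thesis .
  qed
  ultimately show ?thesis using i by (simp add: power2_eq_square mult_ac)
qed

text \<open>Every f-vector entry up to the rank is positive, since subsets of a basis are independent.\<close>
lemma fvec_pos:
  assumes M: "matroid E D" and k: "k \<le> matroid_rank D"
  shows "0 < fvec D k"
proof -
  have fD: "finite D" using family_finite[OF matroid_finite_ground[OF M] matroid_subset_Pow[OF M]] .
  have "matroid_rank D \<in> card ` D"
    unfolding matroid_rank_def using fD matroid_empty_indep[OF M] by (intro Max_in) auto
  then obtain B where B: "B \<in> D" "card B = matroid_rank D" by auto
  obtain A where A: "A \<subseteq> B" "card A = k" using k B(2) by (metis obtain_subset_with_card_n)
  have "A \<in> {I\<in>D. card I = k}" using matroid_down_closed[OF M B(1) A(1)] A(2) by simp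
  then show ?thesis unfolding fvec_def using fD by (auto simp: card_gt_0_iff)
qed

text \<open>Strict log-concavity: the Mason inequality with the factor (i + 1) / i > 1 and
  positivity of f_(i-1) f_(i+1) below the rank.\<close>
theorem theorem1:
  fixes E :: "'e set" and Delta :: "'e set set"
  assumes "matroid E Delta"
    and "realizable_over TYPE('k::field) E Delta"
  shows "\<forall>i. 1 \<le> i \<and> i + 1 \<le> matroid_rank Delta \<longrightarrow>
           fvec Delta (i - 1) * fvec Delta (i + 1) < (fvec Delta i)^2"
proof (intro allI impI)
  fix i assume i: "1 \<le> i \<and> i + 1 \<le> matroid_rank Delta"
  define P where "P = fvec Delta (i - 1) * fvec Delta (i + 1)"
  have "i - 1 \<le> matroid_rank Delta" "i + 1 \<le> matroid_rank Delta" using i by auto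
  then have "0 < P" unfolding P_def using fvec_pos[OF assms(1)] by simp
  have "real (i + 1) * real P \<le> real i * real (fvec Delta i)^2"
    using fvec_mason_inequality[OF assms(1)] i unfolding P_def by simp
  then have mason: "(i + 1) * P \<le> i * (fvec Delta i)^2"
    by (metis of_nat_le_iff of_nat_mult of_nat_power)
  show "fvec Delta (i - 1) * fvec Delta (i + 1) < (fvec Delta i)^2"
  proof (rule ccontr)
    assume "\<not> ?thesis"
    then have "i * (fvec Delta i)^2 \<le> i * P" unfolding P_def by simp
    then have "(i + 1) * P \<le> i * P" using mason by linarith
    then show False using \<open>0 < P\<close> by simp
  qed
qed

end
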